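(* Let $G=(V,E)$ be a claw-free graph and $I$ a maximum cardinality independent set of $G$. For any $a,b\in I$ with $a\ne b$ we have $N(\mathtt{T1}^a_b)\cap V_b=\mathtt{T1}^b_a$ and $N(\mathtt{T2}^a)\cap V_b\subseteq\mathtt{T2}^b$.
   Context: Graphs are finite, simple, undirected; claw-free means no induced $K_{1,3}$. For a set $X$ of vertices, $N(X)=\bigcup_{x\in X}N[x]\setminus X$. For $a\in I$, the $1$-pack $V_a$ is $\{v\in V\setminus I : N(v)\cap I=\{a\}\}$. Each $V_a$ is partitioned according to neighbourhoods in the union of all $1$-packs: $\mathtt{T0}^a$ consists of $v\in V_a$ with no neighbour in any $1$-pack other than $V_a$; for $b\in I\setminus\{a\}$, $\mathtt{T1}^a_b$ consists of $v\in V_a$ that have a neighbour in $V_b$ and no neighbour in any $1$-pack other than $V_a$ and $V_b$; $\mathtt{T2}^a$ consists of $v\in V_a$ having neighbours in at least two distinct $1$-packs other than $V_a$. *)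

theory Defs
  imports Main
begin

definition simple_graph :: "'a set \<Rightarrow> ('a \<Rightarrow> 'a \<Rightarrow> bool) \<Rightarrow> bool" where
  "simple_graph V E \<longleftrightarrow> finite V \<and> (\<forall>u v. E u v \<longrightarrow> u \<in> V \<and> v \<in> V) \<and>
     (\<forall>u v. E u v \<longrightarrow> E v u) \<and> (\<forall>v. \<not> E v v)"

definition nbhd :: "'a set \<Rightarrow> ('a \<Rightarrow> 'a \<Rightarrow> bool) \<Rightarrow> 'a \<Rightarrow> 'a set" where
  "nbhd V E v = {u \<in> V. E v u}"

definition cnbhd :: "'a set \<Rightarrow> ('a \<Rightarrow> 'a \<Rightarrow> bool) \<Rightarrow> 'a \<Rightarrow> 'a set" where
  "cnbhd V E v = insert v (nbhd V E v)"

definition set_nbhd :: "'a set \<Rightarrow> ('a \<Rightarrow> 'a \<Rightarrow> bool) \<Rightarrow> 'a set \<Rightarrow> 'a set" where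
  "set_nbhd V E X = (\<Union>x\<in>X. cnbhd V E x) - X"

definition independent :: "'a set \<Rightarrow> ('a \<Rightarrow> 'a \<Rightarrow> bool) \<Rightarrow> 'a set \<Rightarrow> bool" where
  "independent V E S \<longleftrightarrow> S \<subseteq> V \<and> (\<forall>u\<in>S. \<forall>v\<in>S. \<not> E u v)"

definition max_independent :: "'a set \<Rightarrow> ('a \<Rightarrow> 'a \<Rightarrow> bool) \<Rightarrow> 'a set \<Rightarrow> bool" where
  "max_independent V E I \<longleftrightarrow> independent V E I \<and>
     (\<forall>S. independent V E S \<longrightarrow> card S \<le> card I)"

definition claw_free :: "'a set \<Rightarrow> ('a \<Rightarrow> 'a \<Rightarrow> bool) \<Rightarrow> bool" where
  "claw_free V E \<longleftrightarrow> \<not> (\<exists>c x y z. c \<in> V \<and> x \<in> V \<and> y \<in> V \<and> z \<in> V \<and>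
      E c x \<and> E c y \<and> E c z \<and> x \<noteq> y \<and> x \<noteq> z \<and> y \<noteq> z \<and>
      \<not> E x y \<and> \<not> E x z \<and> \<not> E y z)"

definition pack1 :: "'a set \<Rightarrow> ('a \<Rightarrow> 'a \<Rightarrow> bool) \<Rightarrow> 'a set \<Rightarrow> 'a \<Rightarrow> 'a set" where
  "pack1 V E I a = {v \<in> V - I. nbhd V E v \<inter> I = {a}}"

definition T1 :: "'a set \<Rightarrow> ('a \<Rightarrow> 'a \<Rightarrow> bool) \<Rightarrow> 'a set \<Rightarrow> 'a \<Rightarrow> 'a \<Rightarrow> 'a set" where
  "T1 V E I a b = {v \<in> pack1 V E I a.
      (\<exists>u \<in> pack1 V E I b. E v u) \<and>
      (\<forall>c \<in> I - {a, b}. \<forall>u \<in> pack1 V E I c. \<not> E v u)}"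

definition T2 :: "'a set \<Rightarrow> ('a \<Rightarrow> 'a \<Rightarrow> bool) \<Rightarrow> 'a set \<Rightarrow> 'a \<Rightarrow> 'a set" where
  "T2 V E I a = {v \<in> pack1 V E I a.
      \<exists>b c. b \<in> I - {a} \<and> c \<in> I - {a} \<and> b \<noteq> c \<and>
        (\<exists>u \<in> pack1 V E I b. E v u) \<and> (\<exists>w \<in> pack1 V E I c. E v w)}"

end

theory Submission
  imports Defs
begin

text \<open>A vertex x of the 1-pack V_a is the centre of a potential claw whose leaves are a and
  any two neighbours u \<in> V_b, w \<in> V_c of x with a, b, c distinct: a sees neither u nor w,
  because a pack vertex sees only its own element of I. Claw-freeness therefore forces u and w
  to be adjacent. All three inclusions follow from this one observation.\<close>

lemma simple_graph_sym: "simple_graph V E \<Longrightarrow> E u v \<Longrightarrow> E v u"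
  unfolding simple_graph_def by blast

lemma mem_pack1_iff:
  assumes "simple_graph V E"
  shows "v \<in> pack1 V E I a \<longleftrightarrow>
    v \<in> V \<and> v \<notin> I \<and> a \<in> I \<and> E v a \<and> (\<forall>c\<in>I. E v c \<longrightarrow> c = a)"
  using assms unfolding pack1_def nbhd_def simple_graph_def by blast

lemma pack1_disjoint:
  assumes "simple_graph V E" "v \<in> pack1 V E I a" "v \<in> pack1 V E I b"
  shows "a = b"
  using assms by (simp add: mem_pack1_iff)

lemma mem_set_nbhd_iff: "v \<in> set_nbhd V E X \<longleftrightarrow> v \<in> V \<and> v \<notin> X \<and> (\<exists>x\<in>X. E x v)"
  unfolding set_nbhd_def cnbhd_def nbhd_def by blast

lemma pack1_nbrs_adjacent:
  assumes G: "simple_graph V E" and "claw_free V E"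
    and x: "x \<in> pack1 V E I a" and u: "u \<in> pack1 V E I b" and w: "w \<in> pack1 V E I c"
    and "E x u" "E x w" "a \<noteq> b" "a \<noteq> c" "b \<noteq> c"
  shows "E u w"
proof -
  have "\<not> E u a" "\<not> E w a" "a \<noteq> u" "a \<noteq> w" "a \<in> V" "E x a"
    using x u w assms(8,9) G unfolding mem_pack1_iff[OF G] simple_graph_def by metis+
  moreover have "u \<noteq> w" using pack1_disjoint[OF G u] w assms(10) by blast
  moreover have "x \<in> V" "u \<in> V" "w \<in> V" using x u w by (simp_all add: mem_pack1_iff[OF G])
  ultimately show ?thesis
    using assms(2,6,7) simple_graph_sym[OF G] unfolding claw_free_def by metis
qed

lemma nbhd_T1_inter_pack1_subset:
  assumes G: "simple_graph V E" and claw: "claw_free V E" and "a \<noteq> b"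
  shows "set_nbhd V E (T1 V E I a b) \<inter> pack1 V E I b \<subseteq> T1 V E I b a"
proof
  fix v assume "v \<in> set_nbhd V E (T1 V E I a b) \<inter> pack1 V E I b"
  then obtain x where x: "x \<in> T1 V E I a b" "E x v" and v: "v \<in> pack1 V E I b"
    by (auto simp: mem_set_nbhd_iff)
  have xa: "x \<in> pack1 V E I a" using x(1) unfolding T1_def by blast
  have "\<not> E v w" if "c \<in> I - {b, a}" "w \<in> pack1 V E I c" for c w
  proof
    assume "E v w"
    with pack1_nbrs_adjacent[OF G claw v xa that(2)] have "E x w"
      using x(2) simple_graph_sym[OF G] assms(3) that(1) by blast
    with x(1) that show False unfolding T1_def by blast
  qed
  then show "v \<in> T1 V E I b a"
    unfolding T1_def using v xa x(2) simple_graph_sym[OF G] by blast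
qed

lemma T1_subset_nbhd_T1_inter_pack1:
  assumes G: "simple_graph V E" and claw: "claw_free V E" and "a \<noteq> b"
  shows "T1 V E I b a \<subseteq> set_nbhd V E (T1 V E I a b) \<inter> pack1 V E I b"
proof
  fix v assume v: "v \<in> T1 V E I b a"
  then have vb: "v \<in> pack1 V E I b" unfolding T1_def by blast
  obtain x where xa: "x \<in> pack1 V E I a" and "E v x" using v unfolding T1_def by blast
  then have xv: "E x v" using simple_graph_sym[OF G] by blast
  have "\<not> E x w" if "c \<in> I - {a, b}" "w \<in> pack1 V E I c" for c w
  proof
    assume "E x w"
    with pack1_nbrs_adjacent[OF G claw xa vb that(2) xv] have "E v w"
      using assms(3) that(1) by blast
    with v that show False unfolding T1_def by blast
  qed
  then have "x \<in> T1 V E I a b" unfolding T1_def using xa vb xv by blast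
  moreover have "v \<notin> T1 V E I a b"
    using pack1_disjoint[OF G vb] assms(3) unfolding T1_def by blast
  ultimately show "v \<in> set_nbhd V E (T1 V E I a b) \<inter> pack1 V E I b"
    using vb xv by (auto simp: mem_set_nbhd_iff mem_pack1_iff[OF G])
qed

lemma nbhd_T2_inter_pack1_subset:
  assumes G: "simple_graph V E" and claw: "claw_free V E" and "a \<in> I" "a \<noteq> b"
  shows "set_nbhd V E (T2 V E I a) \<inter> pack1 V E I b \<subseteq> T2 V E I b"
proof
  fix v assume "v \<in> set_nbhd V E (T2 V E I a) \<inter> pack1 V E I b"
  then obtain x where x: "x \<in> T2 V E I a" "E x v" and v: "v \<in> pack1 V E I b"
    by (auto simp: mem_set_nbhd_iff)
  have xa: "x \<in> pack1 V E I a" using x(1) unfolding T2_def by blast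
  obtain c u where c: "c \<in> I - {a}" "c \<noteq> b" and u: "u \<in> pack1 V E I c" "E x u"
    using x(1) unfolding T2_def by blast
  have "E v u" using pack1_nbrs_adjacent[OF G claw xa v u(1) x(2) u(2)] assms(4) c by blast
  then show "v \<in> T2 V E I b"
    unfolding T2_def using v xa u(1) x(2) c assms(3,4) simple_graph_sym[OF G] by blast
qed

theorem lemma12:
  fixes V :: "'a set" and E :: "'a \<Rightarrow> 'a \<Rightarrow> bool" and I :: "'a set" and a b :: 'a
  assumes "simple_graph V E"
    and "claw_free V E"
    and "max_independent V E I"
    and "a \<in> I" and "b \<in> I" and "a \<noteq> b"
  shows "set_nbhd V E (T1 V E I a b) \<inter> pack1 V E I b = T1 V E I b a
     \<and> set_nbhd V E (T2 V E I a) \<inter> pack1 V E I b \<subseteq> T2 V E I b"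
  using nbhd_T1_inter_pack1_subset[OF assms(1,2,6)]
    T1_subset_nbhd_T1_inter_pack1[OF assms(1,2,6)]
    nbhd_T2_inter_pack1_subset[OF assms(1,2,4,6)]
  by blast

end
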